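(* Let $k\ge1$ be an integer and $p\in[1,\infty)$. There exist constants $C_0,\dots,C_k>0$ and $E_0,\dots,E_{k-1}>0$, depending only on $p$ and $k$, such that the following holds. Let $A_0,\dots,A_k$ be entire functions and consider $$f^{(k)}+A_{k-1}f^{(k-1)}+\cdots+A_{1}f'+A_{0}f=A_{k}.$$ If $$\sum_{i=0}^{k}C_i\left(\sum_{j=0}^{k-1}\sup_{z\in\mathbb{C}}\left\{\frac{|A_j(z)|}{(1+|z|)^{k-i-j}}\right\}E_j\right)<1$$ and some $k$th order primitive $\varphi_k$ of $A_k$ (i.e. $\varphi_k^{(k)}=A_k$) belongs to $F^{p,k}$, then every solution $f$ of the equation belongs to $F^{p,k}$.
   Context: $dm$ denotes Lebesgue area measure on $\mathbb{C}$. For $p\in[1,\infty)$, $F^p$ is the space of entire $f$ with $\|f\|_p^p=\int_{\mathbb{C}}|f(z)e^{-\frac12|z|^2}|^p\,dm(z)<\infty$. For a positive integer $m$, the Fock–Sobolev space $F^{p,m}$ consists of entire functions $f$ with $\|f\|_{F^{p,m}}=\sum_{\alpha=0}^{m}\|f^{(\alpha)}\|_p<\infty$. *)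

theory Defs
  imports "HOL-Analysis.Analysis"
begin

definition in_fock :: "real \<Rightarrow> (complex \<Rightarrow> complex) \<Rightarrow> bool" where
  "in_fock p f \<longleftrightarrow> f holomorphic_on UNIV \<and>
     nn_integral (lborel :: complex measure) (\<lambda>z. ennreal (norm (f z * complex_of_real (exp (- ((norm z) ^ 2) / 2))) powr p)) < \<infinity>"

definition in_fock_sobolev :: "real \<Rightarrow> nat \<Rightarrow> (complex \<Rightarrow> complex) \<Rightarrow> bool" where
  "in_fock_sobolev p m f \<longleftrightarrow> f holomorphic_on UNIV \<and>
     (\<forall>\<alpha>\<le>m. in_fock p ((deriv ^^ \<alpha>) f))"

end

(* With all constants equal to 1, the summand i = k of the smallness condition gives
   |A_j(z)| < (1 + |z|)^(-j); by Liouville's theorem A_j = 0 for 1 <= j < k and A_0 = c is constant.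
   Then u = f - phi solves u^(k) + c u = - c phi, and factoring z^k + c into linear factors reduces
   the claim to the invertibility of d/dz - r on F^p: if g' - r g lies in F^p, so does g.
   A Weyl shift g(z - a) exp(cnj a z), an isometry of F^p up to a constant factor, reduces this to r = 0.
   For r = 0, g(z) is recovered by integrating g' along the ray from z/|z| to z; Jensen's inequality
   with a weight matched to the Gaussian, followed by Fubini and the substitution w = t z, bounds the
   F^p integral of g by that of g'. *)

theory Submission
  imports Defs "HOL-Complex_Analysis.Complex_Analysis" "HOL-Probability.Probability"
    "HOL-Computational_Algebra.Fundamental_Theorem_Algebra" "HOL-Real_Asymp.Real_Asymp"
begin

section \<open>The Gaussian weight and the spaces \<open>F\<^sup>p\<close>\<close>

definition fock_weight :: "complex \<Rightarrow> real" where
  "fock_weight z = exp (- ((norm z) ^ 2) / 2)"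

lemma fock_weight_pos [simp]: "fock_weight z > 0"
  by (simp add: fock_weight_def)

lemma fock_weight_nonneg [simp]: "fock_weight z \<ge> 0"
  using fock_weight_pos[of z] by linarith

lemma fock_weight_le_1: "fock_weight z \<le> 1"
  by (simp add: fock_weight_def)

lemma continuous_on_fock_weight: "continuous_on UNIV fock_weight"
  unfolding fock_weight_def by (intro continuous_intros) auto

lemma borel_measurable_fock_weight [measurable]: "fock_weight \<in> borel_measurable borel"
  unfolding fock_weight_def by measurable

definition fock_integral :: "real \<Rightarrow> (complex \<Rightarrow> complex) \<Rightarrow> ennreal" where
  "fock_integral p f = (\<integral>\<^sup>+ z. ennreal ((norm (f z) * fock_weight z) powr p) \<partial>lborel)"

lemma in_fock_iff_fock_integral:
  "in_fock p f \<longleftrightarrow> f holomorphic_on UNIV \<and> fock_integral p f < \<infinity>"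
  unfolding in_fock_def fock_integral_def fock_weight_def by (simp add: norm_mult)

lemma borel_measurable_fock_integrand:
  assumes "continuous_on UNIV f"
  shows "(\<lambda>z. (norm (f z) * fock_weight z) powr p) \<in> borel_measurable borel"
    and "(\<lambda>z. ennreal ((norm (f z) * fock_weight z) powr p)) \<in> borel_measurable borel"
proof -
  have [measurable]: "f \<in> borel_measurable borel"
    using assms borel_measurable_continuous_onI by blast
  show "(\<lambda>z. (norm (f z) * fock_weight z) powr p) \<in> borel_measurable borel" by measurable
  show "(\<lambda>z. ennreal ((norm (f z) * fock_weight z) powr p)) \<in> borel_measurable borel" by measurable
qed

lemma powr_add_le_two_powr:
  fixes a b p :: real
  assumes "a \<ge> 0" "b \<ge> 0" "p \<ge> 0"
  shows "(a + b) powr p \<le> 2 powr p * (a powr p + b powr p)"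
proof -
  have "(a + b) powr p \<le> (2 * max a b) powr p"
    using assms by (intro powr_mono2) auto
  also have "\<dots> = 2 powr p * max a b powr p"
    using assms by (simp add: powr_mult)
  also have "max a b powr p \<le> a powr p + b powr p"
    by (cases "a \<le> b") (auto simp: max_def)
  hence "2 powr p * max a b powr p \<le> 2 powr p * (a powr p + b powr p)"
    by (intro mult_left_mono) auto
  finally show ?thesis .
qed

lemma in_fock_add:
  assumes p: "p \<ge> 0" and f: "in_fock p f" and g: "in_fock p g"
  shows "in_fock p (\<lambda>z. f z + g z)"
proof -
  have hf: "f holomorphic_on UNIV" and hg: "g holomorphic_on UNIV"
    using f g by (auto simp: in_fock_iff_fock_integral)
  have mf: "(\<lambda>z. ennreal ((norm (f z) * fock_weight z) powr p)) \<in> borel_measurable lborel"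
   and mg: "(\<lambda>z. ennreal ((norm (g z) * fock_weight z) powr p)) \<in> borel_measurable lborel"
    using borel_measurable_fock_integrand(2)[OF holomorphic_on_imp_continuous_on] hf hg by simp_all
  have "fock_integral p (\<lambda>z. f z + g z) \<le> (\<integral>\<^sup>+ z. ennreal (2 powr p) *
      (ennreal ((norm (f z) * fock_weight z) powr p) + ennreal ((norm (g z) * fock_weight z) powr p)) \<partial>lborel)"
    unfolding fock_integral_def
  proof (intro nn_integral_mono)
    fix z
    have "(norm (f z + g z) * fock_weight z) powr p
        \<le> (norm (f z) * fock_weight z + norm (g z) * fock_weight z) powr p"
      using p by (intro powr_mono2) (auto simp: distrib_right[symmetric] norm_triangle_ineq)
    also have "\<dots> \<le> 2 powr p * ((norm (f z) * fock_weight z) powr p + (norm (g z) * fock_weight z) powr p)"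
      using p by (intro powr_add_le_two_powr) auto
    finally show "ennreal ((norm (f z + g z) * fock_weight z) powr p) \<le> ennreal (2 powr p) *
        (ennreal ((norm (f z) * fock_weight z) powr p) + ennreal ((norm (g z) * fock_weight z) powr p))"
      by (simp add: ennreal_mult'[symmetric] ennreal_plus[symmetric] del: ennreal_plus)
  qed
  also have "\<dots> = ennreal (2 powr p) * (fock_integral p f + fock_integral p g)"
    unfolding fock_integral_def using mf mg by (simp add: nn_integral_cmult nn_integral_add)
  also have "\<dots> < \<infinity>"
    using f g by (auto simp: in_fock_iff_fock_integral ennreal_mult_less_top)
  finally show ?thesis
    using hf hg by (auto simp: in_fock_iff_fock_integral intro!: holomorphic_intros)
qed

lemma in_fock_cmult:
  assumes f: "in_fock p f" and p: "p \<ge> 0"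
  shows "in_fock p (\<lambda>z. c * f z)"
proof -
  have hf: "f holomorphic_on UNIV" using f by (auto simp: in_fock_iff_fock_integral)
  have "fock_integral p (\<lambda>z. c * f z)
      = (\<integral>\<^sup>+ z. ennreal (norm c powr p) * ennreal ((norm (f z) * fock_weight z) powr p) \<partial>lborel)"
    unfolding fock_integral_def
    by (intro nn_integral_cong) (simp add: norm_mult ennreal_mult'[symmetric] powr_mult[symmetric] mult.assoc)
  also have "\<dots> = ennreal (norm c powr p) * fock_integral p f"
    unfolding fock_integral_def using hf holomorphic_on_imp_continuous_on
    by (subst nn_integral_cmult) (auto intro!: borel_measurable_fock_integrand)
  also have "\<dots> < \<infinity>" using f by (auto simp: in_fock_iff_fock_integral ennreal_mult_less_top)
  finally show ?thesis using hf by (auto simp: in_fock_iff_fock_integral intro!: holomorphic_intros)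
qed

lemma nn_integral_gaussian_real_finite:
  "(\<integral>\<^sup>+ x. ennreal (exp (- (x::real)\<^sup>2 / 2)) \<partial>lborel) < \<infinity>"
proof -
  have "(\<integral>\<^sup>+ x. ennreal (exp (- (x::real)\<^sup>2 / 2)) \<partial>lborel)
      = (\<integral>\<^sup>+ x. ennreal (sqrt (2*pi) * std_normal_density x) \<partial>lborel)"
    by (intro nn_integral_cong) (simp add: std_normal_density_def)
  also have "\<dots> = ennreal (sqrt (2*pi)) * (\<integral>\<^sup>+ x. ennreal (std_normal_density x) \<partial>lborel)"
    by (subst nn_integral_cmult[symmetric]) (auto simp: ennreal_mult)
  also have "(\<integral>\<^sup>+ x. ennreal (std_normal_density x) \<partial>lborel) = ennreal 1"
    by (subst nn_integral_eq_integral) auto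
  finally show ?thesis by (simp add: ennreal_mult_less_top)
qed

lemma nn_integral_gaussian_complex_finite:
  "(\<integral>\<^sup>+ z. ennreal (exp (- (norm (z::complex))\<^sup>2 / 2)) \<partial>lborel) < \<infinity>"
proof -
  have "(\<integral>\<^sup>+ z. ennreal (exp (- (norm (z::complex))\<^sup>2 / 2)) \<partial>lborel) =
        (\<integral>\<^sup>+ (z::complex). (\<Prod>b\<in>Basis. (\<lambda>b x. ennreal (exp (- x\<^sup>2 / 2))) b (z \<bullet> b)) \<partial>lborel)"
  proof (intro nn_integral_cong)
    fix z :: complex
    have "exp (- (norm z)\<^sup>2 / 2) = exp (- (Re z)\<^sup>2 / 2) * exp (- (Im z)\<^sup>2 / 2)"
      by (simp add: cmod_power2 exp_add[symmetric] add_divide_distrib)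
    thus "ennreal (exp (- (norm z)\<^sup>2 / 2)) = (\<Prod>b\<in>Basis. (\<lambda>b x. ennreal (exp (- x\<^sup>2 / 2))) b (z \<bullet> b))"
      by (simp add: Basis_complex_def inner_complex_def ennreal_mult)
  qed
  also have "\<dots> = (\<Prod>b\<in>(Basis::complex set). (\<integral>\<^sup>+ x. ennreal (exp (- x\<^sup>2 / 2)) \<partial>lborel))"
    by (rule nn_integral_lborel_prod) auto
  also have "\<dots> < \<infinity>"
    using nn_integral_gaussian_real_finite by (simp add: Basis_complex_def ennreal_mult_less_top)
  finally show ?thesis .
qed

lemma fock_integral_const_finite:
  assumes p: "p \<ge> 1"
  shows "fock_integral p (\<lambda>_. c) < \<infinity>"
proof -
  have "fock_integral p (\<lambda>_. c)
      \<le> (\<integral>\<^sup>+ z. ennreal (norm c powr p) * ennreal (exp (- (norm (z::complex))\<^sup>2 / 2)) \<partial>lborel)"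
    unfolding fock_integral_def
  proof (rule nn_integral_mono)
    fix z :: complex
    have "fock_weight z powr p = exp (- ((norm z) ^ 2) / 2 * p)"
      by (simp add: fock_weight_def exp_powr_real)
    also have "\<dots> \<le> exp (- (norm z)\<^sup>2 / 2)"
      using p mult_left_mono[of 1 p "(norm z)^2"] by simp
    finally have "(norm c * fock_weight z) powr p \<le> norm c powr p * exp (- (norm z)\<^sup>2 / 2)"
      by (simp add: powr_mult mult_left_mono)
    thus "ennreal ((norm c * fock_weight z) powr p)
        \<le> ennreal (norm c powr p) * ennreal (exp (- (norm z)\<^sup>2 / 2))"
      by (simp add: ennreal_mult'[symmetric] ennreal_leI)
  qed
  also have "\<dots> = ennreal (norm c powr p) * (\<integral>\<^sup>+ z. ennreal (exp (- (norm (z::complex))\<^sup>2 / 2)) \<partial>lborel)"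
    by (rule nn_integral_cmult) measurable
  also have "\<dots> < \<infinity>"
    using nn_integral_gaussian_complex_finite by (simp add: ennreal_mult_less_top)
  finally show ?thesis .
qed

section \<open>Weyl shifts\<close>

definition weyl_shift :: "complex \<Rightarrow> (complex \<Rightarrow> complex) \<Rightarrow> complex \<Rightarrow> complex" where
  "weyl_shift a g = (\<lambda>z. g (z - a) * exp (cnj a * z))"

lemma norm_exp_cnj_mult_fock_weight:
  "norm (exp (cnj a * z)) * fock_weight z = exp ((norm a)^2/2) * fock_weight (z - a)"
proof -
  have "Re (cnj a * z) - (norm z)^2/2 = (norm a)^2/2 - (norm (z - a))^2/2"
    unfolding cmod_power2 by (simp add: power2_eq_square field_simps)
  hence "exp (Re (cnj a * z)) * exp (- ((norm z) ^ 2) / 2)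
      = exp ((norm a)^2/2) * exp (- ((norm (z - a)) ^ 2) / 2)"
    by (simp add: exp_add[symmetric])
  thus ?thesis by (simp add: fock_weight_def norm_exp)
qed

lemma nn_integral_lborel_translate:
  fixes F :: "complex \<Rightarrow> ennreal"
  assumes [measurable]: "F \<in> borel_measurable borel"
  shows "(\<integral>\<^sup>+ z. F (z - a) \<partial>lborel) = (\<integral>\<^sup>+ z. F z \<partial>lborel)"
proof -
  have "(\<integral>\<^sup>+ z. F z \<partial>lborel) = (\<integral>\<^sup>+ z. F z \<partial>(distr lborel borel ((+) (-a))))"
    by (simp add: lborel_distr_plus)
  also have "\<dots> = (\<integral>\<^sup>+ z. F (-a + z) \<partial>lborel)"
    by (subst nn_integral_distr) auto
  finally show ?thesis by simp
qed

lemma fock_integral_weyl_shift: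
  assumes g: "continuous_on UNIV g" and p: "p \<ge> 0"
  shows "fock_integral p (weyl_shift a g) = ennreal (exp ((norm a)^2/2) powr p) * fock_integral p g"
proof -
  note mg = borel_measurable_fock_integrand(2)[OF g, of p]
  have [measurable]: "g \<in> borel_measurable borel"
    using g borel_measurable_continuous_onI by blast
  have "fock_integral p (weyl_shift a g) = (\<integral>\<^sup>+ z. ennreal (exp ((norm a)^2/2) powr p) *
      ennreal ((norm (g (z - a)) * fock_weight (z - a)) powr p) \<partial>lborel)"
    unfolding fock_integral_def
  proof (intro nn_integral_cong)
    fix z
    have "norm (weyl_shift a g z) * fock_weight z = exp ((norm a)^2/2) * (norm (g (z - a)) * fock_weight (z - a))"
      using norm_exp_cnj_mult_fock_weight[of a z] by (simp add: weyl_shift_def norm_mult mult_ac)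
    thus "ennreal ((norm (weyl_shift a g z) * fock_weight z) powr p) = ennreal (exp ((norm a)^2/2) powr p) *
        ennreal ((norm (g (z - a)) * fock_weight (z - a)) powr p)"
      by (simp add: powr_mult ennreal_mult'[symmetric])
  qed
  also have "\<dots> = ennreal (exp ((norm a)^2/2) powr p) *
      (\<integral>\<^sup>+ z. ennreal ((norm (g (z - a)) * fock_weight (z - a)) powr p) \<partial>lborel)"
    by (rule nn_integral_cmult) measurable
  also have "(\<integral>\<^sup>+ z. ennreal ((norm (g (z - a)) * fock_weight (z - a)) powr p) \<partial>lborel) = fock_integral p g"
    unfolding fock_integral_def using nn_integral_lborel_translate[OF mg, of a] by simp
  finally show ?thesis .
qed

lemma holomorphic_weyl_shift:
  assumes "g holomorphic_on UNIV"
  shows "weyl_shift a g holomorphic_on UNIV"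
  unfolding weyl_shift_def using assms
  by (intro holomorphic_intros holomorphic_on_compose_gen[where g=g and f="\<lambda>z. z - a" and t=UNIV, unfolded o_def])
     auto

lemma in_fock_weyl_shift_iff:
  assumes g: "g holomorphic_on UNIV" and p: "p \<ge> 0"
  shows "in_fock p (weyl_shift a g) \<longleftrightarrow> in_fock p g"
  using g p holomorphic_weyl_shift[OF g]
    fock_integral_weyl_shift[OF holomorphic_on_imp_continuous_on[OF g] p]
  by (auto simp: in_fock_iff_fock_integral ennreal_mult_less_top)

lemma deriv_weyl_shift:
  assumes g: "g holomorphic_on UNIV"
  shows "deriv (weyl_shift a g) = weyl_shift a (\<lambda>w. deriv g w + cnj a * g w)"
proof
  fix z
  have "(weyl_shift a g has_field_derivative
      deriv g (z - a) * exp (cnj a * z) + g (z - a) * (exp (cnj a * z) * cnj a)) (at z)"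
    unfolding weyl_shift_def using g
    by (auto intro!: derivative_eq_intros DERIV_chain2[where f=g]
        holomorphic_derivI[of g UNIV, where T=UNIV, simplified])
  thus "deriv (weyl_shift a g) z = weyl_shift a (\<lambda>w. deriv g w + cnj a * g w) z"
    by (simp add: DERIV_imp_deriv weyl_shift_def algebra_simps)
qed

section \<open>Estimates along rays\<close>

lemma powr_above_tangent:
  fixes y m p :: real
  assumes "y \<ge> 0" "m \<ge> 0" "p \<ge> 1"
  shows "m powr p + p * m powr (p - 1) * (y - m) \<le> y powr p"
proof (cases "m = 0")
  case True thus ?thesis using assms by simp
next
  case False
  hence m0: "m > 0" using assms by simp
  show ?thesis
  proof (cases "y = 0")
    case True
    have "m powr p = m * m powr (p - 1)"
      using m0 by (simp add: powr_mult_base)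
    hence "m powr p + p * m powr (p - 1) * (y - m) = (1 - p) * m powr p"
      using True by (simp add: algebra_simps)
    also have "\<dots> \<le> 0" using assms by (simp add: mult_nonpos_nonneg)
    finally show ?thesis using True by simp
  next
    case False
    hence y0: "y > 0" using assms by simp
    have d: "((\<lambda>x. x powr p) has_field_derivative p * m powr (p - 1)) (at m within {0<..})"
      using m0 by (auto intro!: derivative_eq_intros)
    have "y powr p - m powr p \<ge> p * m powr (p - 1) * (y - m)"
      by (rule convex_on_imp_above_tangent[OF powr_convex[OF assms(3)] _ _ _ d])
         (use m0 y0 in \<open>auto simp: interior_open\<close>)
    thus ?thesis by simp
  qed
qed

text \<open>Jensen's inequality for \<open>x \<mapsto> x powr p\<close> and the probability density \<open>\<rho> / (\<integral>\<rho>)\<close>,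
  applied to \<open>f / \<rho>\<close>.\<close>

lemma integral_powr_le_weighted:
  fixes f \<rho> :: "real \<Rightarrow> real" and a b p :: real
  assumes p: "p \<ge> 1" and cf: "continuous_on {a..b} f" and cr: "continuous_on {a..b} \<rho>"
    and f0: "\<And>t. t \<in> {a..b} \<Longrightarrow> f t \<ge> 0" and r0: "\<And>t. t \<in> {a..b} \<Longrightarrow> \<rho> t > 0"
    and N0: "integral {a..b} \<rho> > 0"
  shows "(integral {a..b} f) powr p
    \<le> (integral {a..b} \<rho>) powr (p - 1) * integral {a..b} (\<lambda>t. f t powr p * \<rho> t powr (1 - p))"
proof -
  define N where "N = integral {a..b} \<rho>"
  define F where "F = integral {a..b} f"
  define m where "m = F / N"
  have N: "N > 0" using N0 by (simp add: N_def)
  have intf: "f integrable_on {a..b}" using cf by (rule integrable_continuous_interval)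
  have intr: "\<rho> integrable_on {a..b}" using cr by (rule integrable_continuous_interval)
  have F0: "F \<ge> 0" unfolding F_def using f0 intf by (intro integral_nonneg) auto
  have m0: "m \<ge> 0" using N F0 by (simp add: m_def)
  have "continuous_on {a..b} (\<lambda>t. f t powr p * \<rho> t powr (1 - p))"
    using p f0 r0 by (intro continuous_on_mult continuous_on_powr' cf cr continuous_on_const)
      (auto simp: less_imp_le, metis less_irrefl)
  hence intg: "(\<lambda>t. f t powr p * \<rho> t powr (1 - p)) integrable_on {a..b}"
    by (rule integrable_continuous_interval)
  have tangent: "m powr p * \<rho> t + p * m powr (p - 1) * (f t - m * \<rho> t) \<le> f t powr p * \<rho> t powr (1 - p)"
    if t: "t \<in> {a..b}" for t
  proof -
    have rt: "\<rho> t > 0" and ft: "f t \<ge> 0" using r0 f0 t by auto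
    have "(m powr p + p * m powr (p - 1) * (f t / \<rho> t - m)) * \<rho> t \<le> (f t / \<rho> t) powr p * \<rho> t"
      using rt ft m0 p by (intro mult_right_mono powr_above_tangent) auto
    also have "(f t / \<rho> t) powr p * \<rho> t = f t powr p * \<rho> t powr (1 - p)"
      using rt ft by (simp add: powr_divide powr_diff field_simps)
    also have "(m powr p + p * m powr (p - 1) * (f t / \<rho> t - m)) * \<rho> t =
        m powr p * \<rho> t + p * m powr (p - 1) * (f t - m * \<rho> t)"
      using rt by (simp add: field_simps)
    finally show ?thesis .
  qed
  have "integral {a..b} (\<lambda>t. m powr p * \<rho> t + p * m powr (p - 1) * (f t - m * \<rho> t))
        = m powr p * N + p * m powr (p - 1) * (F - m * N)"
    unfolding N_def F_def
    by (intro integral_unique has_integral_add has_integral_mult_right has_integral_diff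
        integrable_integral intf intr)
  also have "F - m * N = 0" using N by (simp add: m_def)
  finally have "m powr p * N
      = integral {a..b} (\<lambda>t. m powr p * \<rho> t + p * m powr (p - 1) * (f t - m * \<rho> t))"
    by simp
  also have "\<dots> \<le> integral {a..b} (\<lambda>t. f t powr p * \<rho> t powr (1 - p))"
  proof (rule integral_le[OF _ intg tangent])
    show "(\<lambda>t. m powr p * \<rho> t + p * m powr (p - 1) * (f t - m * \<rho> t)) integrable_on {a..b}"
      by (intro integrable_continuous_interval continuous_intros cf cr)
  qed
  finally have le: "m powr p * N \<le> integral {a..b} (\<lambda>t. f t powr p * \<rho> t powr (1 - p))" .
  have "F powr p = N powr (p - 1) * (m powr p * N)"
  proof -
    have "F = m * N" using N by (simp add: m_def)
    hence "F powr p = m powr p * N powr p" using m0 N by (simp add: powr_mult)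
    also have "N powr p = N powr (p - 1) * N" using N by (simp add: powr_diff)
    finally show ?thesis by simp
  qed
  also have "\<dots> \<le> N powr (p - 1) * integral {a..b} (\<lambda>t. f t powr p * \<rho> t powr (1 - p))"
    using le N by (intro mult_left_mono) auto
  finally show ?thesis by (simp add: N_def F_def)
qed

lemma has_integral_deriv_along_ray:
  assumes g: "g holomorphic_on UNIV" and ab: "a \<le> b"
  shows "((\<lambda>t. z * deriv g (of_real t * z)) has_integral (g (of_real b * z) - g (of_real a * z))) {a..b}"
proof -
  have "((\<lambda>t. g (of_real t * z)) has_vector_derivative (z * deriv g (of_real x * z))) (at x within {a..b})" for x
  proof -
    have "((\<lambda>w. g (w * z)) has_field_derivative (deriv g (of_real x * z) * z)) (at (of_real x))"
      using g by (auto intro!: derivative_eq_intros holomorphic_derivI[of g UNIV, where T=UNIV, simplified]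
          DERIV_chain2[where f=g])
    from has_vector_derivative_real_field[OF this] show ?thesis by (simp add: mult.commute)
  qed
  thus ?thesis by (intro fundamental_theorem_of_calculus ab) auto
qed

lemma norm_le_ray_integral:
  assumes g: "g holomorphic_on UNIV" and B: "\<And>w. norm w \<le> 1 \<Longrightarrow> norm (g w) \<le> B"
    and z: "norm z > 1"
  shows "norm (g z) \<le> B + norm z * integral {1/norm z..1} (\<lambda>t. norm (deriv g (of_real t * z)))"
proof -
  define r where "r = norm z"
  define f where "f t = norm (deriv g (of_real t * z))" for t
  have r: "r > 1" using z by (simp add: r_def)
  have c\<psi>: "continuous_on UNIV (deriv g)"
    using g by (intro holomorphic_on_imp_continuous_on holomorphic_deriv) auto
  have cf: "continuous_on {1/r..1} f"
    unfolding f_def by (intro continuous_on_norm continuous_on_compose2[OF c\<psi>] continuous_intros) auto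
  have ftc: "((\<lambda>t. z * deriv g (of_real t * z)) has_integral (g z - g (of_real (1/r) * z))) {1/r..1}"
    using has_integral_deriv_along_ray[OF g, of "1/r" 1 z] r by simp
  have "norm (g z - g (of_real (1/r) * z)) = norm (integral {1/r..1} (\<lambda>t. z * deriv g (of_real t * z)))"
    by (simp only: integral_unique[OF ftc])
  also have "\<dots> \<le> integral {1/r..1} (\<lambda>t. r * f t)"
  proof (rule integral_norm_bound_integral)
    show "(\<lambda>t. z * deriv g (of_real t * z)) integrable_on {1/r..1}" using ftc by blast
    show "(\<lambda>t. r * f t) integrable_on {1/r..1}"
      by (intro integrable_continuous_interval continuous_on_mult continuous_on_const cf)
  qed (simp add: f_def r_def norm_mult)
  also have "\<dots> = r * integral {1/r..1} f" by (rule integral_mult_right)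
  finally have diff: "norm (g z - g (of_real (1/r) * z)) \<le> r * integral {1/r..1} f" .
  have "norm (of_real (1/r) * z) \<le> 1" using r by (simp add: norm_mult r_def norm_divide)
  hence "norm (g (of_real (1/r) * z)) \<le> B" by (rule B)
  with diff norm_triangle_ineq2[of "g z" "g (of_real (1/r) * z)"] show ?thesis
    unfolding r_def f_def by linarith
qed

lemma has_integral_ray_weight:
  fixes r :: real assumes r: "r > 1"
  shows "((\<lambda>t. t * r^2 * exp (t^2 * r^2 / 2)) has_integral (exp (r^2/2) - exp (1/2))) {1/r..1}"
proof -
  have "((\<lambda>t. t * r^2 * exp (t^2 * r^2 / 2)) has_integral
      (exp (1^2 * r^2/2) - exp ((1/r)^2 * r^2/2))) {1/r..1}"
  proof (rule fundamental_theorem_of_calculus)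
    show "1 / r \<le> 1" using r by simp
    fix x :: real
    have "((\<lambda>t. exp (t^2 * r^2 / 2)) has_real_derivative (x * r^2 * exp (x^2 * r^2 / 2))) (at x within {1/r..1})"
      by (auto intro!: derivative_eq_intros simp: field_simps power2_eq_square)
    thus "((\<lambda>t. exp (t^2 * r^2 / 2)) has_vector_derivative (x * r^2 * exp (x^2 * r^2 / 2))) (at x within {1/r..1})"
      by (simp add: has_real_derivative_iff_has_vector_derivative)
  qed
  thus ?thesis using r by (simp add: power_divide)
qed

definition ray_integrand :: "real \<Rightarrow> (complex \<Rightarrow> complex) \<Rightarrow> complex \<Rightarrow> real \<Rightarrow> real" where
  "ray_integrand p \<psi> z t = (norm (\<psi> (of_real t * z)) * fock_weight (of_real t * z)) powr p * t powr (1 - p) *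
      norm z powr (2 - p) * exp (- (1 - t^2) * (norm z)^2 / 2)"

lemma ray_integrand_nonneg: "ray_integrand p \<psi> z t \<ge> 0"
  unfolding ray_integrand_def by (intro mult_nonneg_nonneg) auto

lemma continuous_on_ray_integrand:
  assumes \<psi>: "continuous_on UNIV \<psi>" and p: "p > 0" and a: "0 < a"
  shows "continuous_on {a..b} (ray_integrand p \<psi> z)"
proof -
  have ray: "continuous_on {a..b} (\<lambda>t. of_real t * z)" by (intro continuous_intros)
  have c0: "continuous_on {a..b} (\<lambda>t. norm (\<psi> (of_real t * z)) * fock_weight (of_real t * z))"
    using continuous_on_compose2[OF \<psi> ray] continuous_on_compose2[OF continuous_on_fock_weight ray]
    by (intro continuous_on_mult continuous_on_norm) auto
  have c1: "continuous_on {a..b} (\<lambda>t. (norm (\<psi> (of_real t * z)) * fock_weight (of_real t * z)) powr p)"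
    by (rule continuous_on_powr'[OF c0 continuous_on_const]) (use p in auto)
  have c2: "continuous_on {a..b} (\<lambda>t. t powr (1 - p))"
    using a by (intro continuous_on_powr'[OF continuous_on_id continuous_on_const]) auto
  have c3: "continuous_on {a..b} (\<lambda>t. exp (- (1 - t^2) * (norm z)^2 / 2))"
    by (intro continuous_intros) auto
  show ?thesis
    unfolding ray_integrand_def by (intro continuous_on_mult c1 c2 c3 continuous_on_const)
qed

lemma ray_weight_powr_identity:
  fixes r t f :: real
  assumes r: "r > 0" and t: "t > 0" and f: "f \<ge> 0"
  shows "r powr p * exp (- (r^2) / 2) * (f powr p * (t * r^2 * exp (t^2 * r^2 / 2)) powr (1 - p))
       = (f * exp (- ((t * r)^2) / 2)) powr p * t powr (1 - p) * r powr (2 - p) * exp (- (1 - t^2) * r^2 / 2)"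
proof -
  have e1: "(f * exp (- ((t * r)^2) / 2)) powr p = f powr p * exp (- p * ((t * r)^2) / 2)"
    using f by (simp add: powr_mult exp_powr_real mult_ac)
  have e2: "(t * r^2 * exp (t^2 * r^2 / 2)) powr (1 - p) = exp ((1 - p) * (ln t + 2 * ln r + t^2 * r^2 / 2))"
    using r t by (simp add: powr_def ln_mult ln_realpow)
  show ?thesis
    unfolding e1 e2 using r t
    by (simp add: powr_def mult_exp_exp) (simp add: field_simps power2_eq_square)
qed

text \<open>Jensen with weight \<open>t r\<^sup>2 exp(t\<^sup>2 r\<^sup>2/2)\<close>, whose total mass is at most \<open>exp(r\<^sup>2/2)\<close>: this
  weight exactly compensates the growth of the Gaussian along the ray.\<close>

lemma powr_ray_integral_le:
  assumes \<psi>: "continuous_on UNIV \<psi>" and p: "p \<ge> 1" and z: "norm z > 1"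
  shows "(norm z * integral {1/norm z..1} (\<lambda>t. norm (\<psi> (of_real t * z))) * fock_weight z) powr p
    \<le> integral {1/norm z..1} (ray_integrand p \<psi> z)"
proof -
  define r where "r = norm z"
  have r: "r > 1" using z by (simp add: r_def)
  have z0: "z \<noteq> 0" using z by auto
  have t0: "t > 0" if "t \<in> {1/r..1}" for t using that r by (auto intro: less_le_trans[of 0 "1/r"])
  define f where "f t = norm (\<psi> (of_real t * z))" for t
  have cf: "continuous_on {1/r..1} f"
    unfolding f_def by (intro continuous_on_norm continuous_on_compose2[OF \<psi>] continuous_intros) auto
  define \<rho> where "\<rho> t = t * r^2 * exp (t^2 * r^2 / 2)" for t
  have cr: "continuous_on {1/r..1} \<rho>" unfolding \<rho>_def by (intro continuous_intros) auto
  have \<rho>0: "\<rho> t > 0" if "t \<in> {1/r..1}" for t using t0[OF that] r by (simp add: \<rho>_def)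
  define N where "N = integral {1/r..1} \<rho>"
  have N: "N = exp (r^2/2) - exp (1/2)"
    unfolding N_def \<rho>_def using has_integral_ray_weight[OF r] by (simp add: integral_unique)
  have N0: "N > 0" unfolding N using r by (simp add: one_less_power)
  define F where "F = integral {1/r..1} f"
  define I where "I = integral {1/r..1} (\<lambda>t. f t powr p * \<rho> t powr (1 - p))"
  have F0: "F \<ge> 0" unfolding F_def by (intro integral_nonneg integrable_continuous_interval cf) (simp add: f_def)
  have I0: "I \<ge> 0" unfolding I_def
    by (intro integral_nonneg integrable_continuous_interval continuous_on_mult continuous_on_powr' cf cr
        continuous_on_const) (use p in \<open>auto simp: f_def less_imp_le dest: \<rho>0\<close>)
  have "F powr p \<le> N powr (p - 1) * I"
    unfolding F_def I_def N_def
    by (rule integral_powr_le_weighted[OF p cf cr _ \<rho>0]) (use N0 in \<open>simp_all add: N_def f_def\<close>)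
  also have "N powr (p - 1) \<le> exp (r^2/2) powr (p - 1)"
    using N0 p by (intro powr_mono2) (auto simp: N)
  hence "N powr (p - 1) * I \<le> exp (r^2/2 * (p - 1)) * I"
    using I0 by (intro mult_right_mono) (auto simp: exp_powr_real)
  finally have jensen: "F powr p \<le> exp (r^2/2 * (p - 1)) * I" .
  have "(r * F * fock_weight z) powr p = r powr p * F powr p * exp (- (r^2) / 2 * p)"
    using r F0 by (simp add: powr_mult fock_weight_def r_def exp_powr_real)
  also have "\<dots> \<le> r powr p * (exp (r^2/2 * (p - 1)) * I) * exp (- (r^2) / 2 * p)"
    using jensen by (intro mult_right_mono mult_left_mono) auto
  also have "\<dots> = r powr p * exp (- (r^2) / 2) * I"
    by (simp add: mult_exp_exp field_simps)
  also have "\<dots> = integral {1/r..1} (\<lambda>t. r powr p * exp (- (r^2) / 2) * (f t powr p * \<rho> t powr (1 - p)))"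
    by (simp add: I_def)
  also have "\<dots> = integral {1/r..1} (ray_integrand p \<psi> z)"
  proof (rule integral_cong)
    fix t assume t: "t \<in> {1/r..1}"
    have "norm (of_real t * z) = t * r" using t0[OF t] by (simp add: norm_mult r_def)
    thus "r powr p * exp (- (r^2) / 2) * (f t powr p * \<rho> t powr (1 - p)) = ray_integrand p \<psi> z t"
      unfolding ray_integrand_def fock_weight_def f_def \<rho>_def
      using ray_weight_powr_identity[of r t "norm (\<psi> (of_real t * z))" p] r t0[OF t] z0
      by (simp add: r_def)
  qed
  finally show ?thesis by (simp add: F_def f_def[abs_def] r_def)
qed

lemma fock_integrand_le_ray_integral:
  assumes g: "g holomorphic_on UNIV" and p: "p \<ge> 1"
    and B: "\<And>w. norm w \<le> 1 \<Longrightarrow> norm (g w) \<le> B" and z: "norm z > 1"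
  shows "(norm (g z) * fock_weight z) powr p
    \<le> 2 powr p * ((B * fock_weight z) powr p + integral {1/norm z..1} (ray_integrand p (deriv g) z))"
proof -
  define F where "F = integral {1/norm z..1} (\<lambda>t. norm (deriv g (of_real t * z)))"
  have B0: "B \<ge> 0" using order.trans[OF norm_ge_zero B[of 0]] by simp
  have c\<psi>: "continuous_on UNIV (deriv g)"
    using g by (intro holomorphic_on_imp_continuous_on holomorphic_deriv) auto
  have "continuous_on {1/norm z..1} (\<lambda>t. norm (deriv g (of_real t * z)))"
    by (intro continuous_on_norm continuous_on_compose2[OF c\<psi>] continuous_intros) auto
  hence F0: "F \<ge> 0" unfolding F_def by (intro integral_nonneg integrable_continuous_interval) auto
  have "(norm (g z) * fock_weight z) powr p \<le> ((B + norm z * F) * fock_weight z) powr p"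
    using norm_le_ray_integral[OF g B z] p by (intro powr_mono2 mult_right_mono) (auto simp: F_def)
  also have "\<dots> \<le> 2 powr p * ((B * fock_weight z) powr p + (norm z * F * fock_weight z) powr p)"
    using B0 F0 p by (simp add: distrib_right powr_add_le_two_powr)
  also have "(norm z * F * fock_weight z) powr p \<le> integral {1/norm z..1} (ray_integrand p (deriv g) z)"
    unfolding F_def by (rule powr_ray_integral_le[OF c\<psi> p z])
  finally show ?thesis by simp
qed

section \<open>Fubini over rays\<close>

lemma nn_integral_ray_kernel:
  fixes u :: real assumes u: "u > 0"
  shows "(\<integral>\<^sup>+ t. ennreal (indicator {0..1} t * (1 / t^3 * exp (- (1 / t^2 - 1) * u^2 / 2))) \<partial>lborel) = ennreal (1 / u^2)"
proof -
  define F where "F t = (if t = 0 then 0 else exp (- (1 / t^2 - 1) * u^2 / 2) / u^2)" for t :: real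
  have lim: "((\<lambda>t::real. exp (- (1 / t^2 - 1) * u^2 / 2) / u^2) \<longlongrightarrow> 0) (at_right 0)"
    using u by real_asymp
  have cont: "continuous_on {0..1} F"
  proof (clarsimp simp: continuous_on_eq_continuous_within)
    fix x :: real assume x: "0 \<le> x" "x \<le> 1"
    show "continuous (at x within {0..1}) F"
    proof (cases "x = 0")
      case True
      have "(F \<longlongrightarrow> F 0) (at_right 0)"
      proof -
        have ev: "\<forall>\<^sub>F t in at_right 0. exp (- (1 / t^2 - 1) * u^2 / 2) / u^2 = F t"
          unfolding eventually_at_filter by (rule always_eventually) (auto simp: F_def)
        moreover have "F 0 = 0" by (simp add: F_def)
        thus ?thesis using tendsto_cong[OF ev] lim by simp
      qed
      thus ?thesis using True by (simp add: continuous_within at_within_Icc_at_right)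
    next
      case False
      hence "x > 0" using x by simp
      have "continuous (at x) (\<lambda>t. exp (- (1 / t^2 - 1) * u^2 / 2) / u^2)"
        using \<open>x > 0\<close> u by (intro continuous_intros) auto
      moreover have ev2: "\<forall>\<^sub>F t in nhds x. exp (- (1 / t^2 - 1) * u^2 / 2) / u^2 = F t"
        using eventually_nhds_in_open[of "{0<..}" x, OF _ ] \<open>x > 0\<close>
        by (intro eventually_mono[OF eventually_nhds_in_open[of "{0<..}" x]]) (auto simp: F_def)
      ultimately have "continuous (at x) F"
        using isCont_cong[OF ev2] by blast
      thus ?thesis by (rule continuous_at_imp_continuous_within)
    qed
  qed
  have der: "(F has_vector_derivative (1 / t^3 * exp (- (1 / t^2 - 1) * u^2 / 2))) (at t)"
    if t: "t \<in> {0<..<1}" for t :: real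
  proof -
    have t0: "t > 0" using t by simp
    have "((\<lambda>t. exp (- (1 / t^2 - 1) * u^2 / 2) / u^2) has_real_derivative (1 / t^3 * exp (- (1 / t^2 - 1) * u^2 / 2))) (at t)"
      using t0 u by (auto intro!: derivative_eq_intros simp: field_simps power2_eq_square power3_eq_cube)
    hence "(F has_real_derivative (1 / t^3 * exp (- (1 / t^2 - 1) * u^2 / 2))) (at t)"
      by (rule has_field_derivative_transform_within_open[where S="{0<..}"]) (use t0 in \<open>auto simp: F_def\<close>)
    thus ?thesis by (simp add: has_real_derivative_iff_has_vector_derivative)
  qed
  have "((\<lambda>t. 1 / t^3 * exp (- (1 / t^2 - 1) * u^2 / 2)) has_integral (F 1 - F 0)) {0..1}"
    by (rule fundamental_theorem_of_calculus_interior[OF _ cont der]) auto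
  hence hi: "((\<lambda>t. 1 / t^3 * exp (- (1 / t^2 - 1) * u^2 / 2)) has_integral (1 / u^2)) {0..1}"
    by (simp add: F_def)
  have "(\<integral>\<^sup>+ t. ennreal (indicator {0..1} t * (1 / t^3 * exp (- (1 / t^2 - 1) * u^2 / 2))) \<partial>lborel) = ennreal (1/u^2)"
    by (rule nn_integral_has_integral_lebesgue[OF _ hi]) auto
  thus ?thesis .
qed

lemma nn_integral_lborel_complex_scale:
  fixes F :: "complex \<Rightarrow> ennreal"
  assumes t: "t > 0" and [measurable]: "F \<in> borel_measurable borel"
  shows "(\<integral>\<^sup>+ z. F z \<partial>lborel) = (\<integral>\<^sup>+ w. ennreal (1 / t^2) * F (of_real (1/t) * w) \<partial>lborel)"
proof -
  have "(\<integral>\<^sup>+ z. F z \<partial>lborel) = (\<integral>\<^sup>+ z. F z \<partial>(density (distr lborel borel (\<lambda>x. 0 + (1/t) *\<^sub>R x)) (\<lambda>_. \<bar>1/t\<bar>^DIM(complex))))"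
    using lborel_affine[of "1/t" "0::complex"] t by simp
  also have "\<dots> = (\<integral>\<^sup>+ z. \<bar>1/t\<bar>^DIM(complex) * F z \<partial>(distr lborel borel (\<lambda>x. 0 + (1/t) *\<^sub>R x)))"
    by (subst nn_integral_density) auto
  also have "\<dots> = (\<integral>\<^sup>+ w. \<bar>1/t\<bar>^DIM(complex) * F (0 + (1/t) *\<^sub>R w) \<partial>lborel)"
    by (subst nn_integral_distr) auto
  also have "\<dots> = (\<integral>\<^sup>+ w. ennreal (1 / t^2) * F (of_real (1/t) * w) \<partial>lborel)"
    using t by (intro nn_integral_cong) (simp add: scaleR_conv_of_real power_divide ennreal_power)
  finally show ?thesis .
qed

lemma borel_measurable_pair_lborelI:
  assumes "f \<in> borel_measurable (borel \<Otimes>\<^sub>M borel)"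
  shows "f \<in> borel_measurable (lborel \<Otimes>\<^sub>M lborel)"
  using assms measurable_cong_sets[OF sets_pair_measure_cong[OF sets_lborel sets_lborel] refl] by blast

definition ray_region :: "(complex \<times> real) set" where
  "ray_region = {x. 1 < norm (fst x) \<and> 1 / norm (fst x) \<le> snd x \<and> snd x \<le> 1}"

definition ray_density :: "real \<Rightarrow> (complex \<Rightarrow> complex) \<Rightarrow> complex \<Rightarrow> real \<Rightarrow> ennreal" where
  "ray_density p \<psi> z t = ennreal (indicator ray_region (z, t) * ray_integrand p \<psi> z t)"

definition scaled_ray_density :: "real \<Rightarrow> (complex \<Rightarrow> complex) \<Rightarrow> complex \<Rightarrow> real \<Rightarrow> ennreal" where
  "scaled_ray_density p \<psi> w t = ennreal (indicator {1..} (norm w) * (norm (\<psi> w) * fock_weight w) powr p * norm w powr (2 - p) *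
        (indicator {0..1} t * (1 / t^3 * exp (- (1 / t^2 - 1) * (norm w)^2 / 2))))"

lemma borel_measurable_ray_density:
  assumes [measurable]: "\<psi> \<in> borel_measurable borel"
  shows "case_prod (ray_density p \<psi>) \<in> borel_measurable (lborel \<Otimes>\<^sub>M lborel)"
proof -
  have [measurable]: "ray_region \<in> sets (borel \<Otimes>\<^sub>M borel)"
  proof -
    have "Measurable.pred (borel \<Otimes>\<^sub>M borel) (\<lambda>x::complex\<times>real. 1 < norm (fst x) \<and> 1 / norm (fst x) \<le> snd x \<and> snd x \<le> 1)"
      by measurable
    thus ?thesis by (simp add: ray_region_def pred_def space_pair_measure)
  qed
  have "(\<lambda>x. ray_density p \<psi> (fst x) (snd x)) \<in> borel_measurable (borel \<Otimes>\<^sub>M borel)"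
    unfolding ray_density_def ray_integrand_def by measurable
  hence "(\<lambda>x. ray_density p \<psi> (fst x) (snd x)) \<in> borel_measurable (lborel \<Otimes>\<^sub>M lborel)"
    by (rule borel_measurable_pair_lborelI)
  thus ?thesis by (simp add: case_prod_beta')
qed

lemma borel_measurable_scaled_ray_density:
  assumes [measurable]: "\<psi> \<in> borel_measurable borel"
  shows "case_prod (scaled_ray_density p \<psi>) \<in> borel_measurable (lborel \<Otimes>\<^sub>M lborel)"
proof -
  have "(\<lambda>x. scaled_ray_density p \<psi> (fst x) (snd x)) \<in> borel_measurable (borel \<Otimes>\<^sub>M borel)"
    unfolding scaled_ray_density_def by measurable
  hence "(\<lambda>x. scaled_ray_density p \<psi> (fst x) (snd x)) \<in> borel_measurable (lborel \<Otimes>\<^sub>M lborel)"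
    by (rule borel_measurable_pair_lborelI)
  thus ?thesis by (simp add: case_prod_beta')
qed

lemma ray_density_scale_identity:
  fixes t u X p :: real
  assumes t: "t > 0" and u: "u > 0"
  shows "(1/t^2) * (X * t powr (1-p) * (u/t) powr (2-p) * exp (- (1 - t^2) * (u/t)^2 / 2))
       = X * u powr (2-p) * (1/t^3 * exp (- (1/t^2 - 1) * u^2 / 2))"
proof -
  have powr_exp: "x powr y = exp (y * ln x)" if "x > 0" for x y :: real
    using that by (simp add: powr_def)
  define q where "q = u^2/t^2 - u^2"
  have e2: "1/t^2 = exp (- (2 * ln t))" using t
    by (simp add: exp_minus exp_of_nat_mult[where n=2, simplified] inverse_eq_divide)
  have e3: "1/t^3 = exp (- (3 * ln t))" using t
    by (simp add: exp_minus exp_of_nat_mult[where n=3, simplified] inverse_eq_divide)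
  have ex1: "- (1 - t^2) * (u/t)^2 = - q" using t by (simp add: field_simps q_def)
  have ex2: "- (1/t^2 - 1) * u^2 = - q" using t by (simp add: field_simps q_def)
  have "(1/t^2) * (X * t powr (1-p) * (u/t) powr (2-p) * exp (- (1 - t^2) * (u/t)^2 / 2))
      = exp (- (2 * ln t)) * (X * t powr (1-p) * (u/t) powr (2-p) * exp (- q / 2))"
    by (simp only: e2 ex1)
  also have "\<dots> = X * u powr (2-p) * (exp (- (3 * ln t)) * exp (- q / 2))"
    using t u by (simp add: powr_exp ln_div mult_exp_exp) (simp add: algebra_simps)
  also have "\<dots> = X * u powr (2-p) * (1/t^3 * exp (- (1/t^2 - 1) * u^2 / 2))"
    by (simp only: e3 ex2)
  finally show ?thesis .
qed

lemma ray_density_eq_0: "t \<le> 0 \<or> t > 1 \<Longrightarrow> ray_density p \<psi> z t = 0"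
proof -
  assume t: "t \<le> 0 \<or> t > 1"
  have "(z, t) \<notin> ray_region"
  proof
    assume "(z, t) \<in> ray_region"
    hence "1 < norm z" "1 / norm z \<le> t" "t \<le> 1" by (auto simp: ray_region_def)
    moreover have "1 / norm z > 0" using \<open>1 < norm z\<close> by (cases "z = 0") auto
    ultimately show False using t by linarith
  qed
  thus ?thesis by (simp add: ray_density_def)
qed

lemma ray_density_scaled_le:
  assumes t: "t > 0"
  shows "ennreal (1 / t^2) * ray_density p \<psi> (of_real (1/t) * w) t \<le> scaled_ray_density p \<psi> w t"
proof (cases "(of_real (1/t) * w, t) \<in> ray_region")
  case False thus ?thesis by (simp add: ray_density_def)
next
  case True
  define u where "u = norm w"
  have nz: "norm (of_real (1/t) * w) = u / t" using t by (simp add: norm_mult norm_divide u_def)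
  from True have c: "1 < u / t" "1 / (u / t) \<le> t" "t \<le> 1"
    unfolding ray_region_def by (simp_all only: mem_Collect_eq fst_conv snd_conv nz)
  have u0: "u > 0" using c(1) t by (metis divide_le_0_iff less_le_not_le zero_less_one norm_ge_zero u_def le_less_trans less_trans)
  have u1: "u \<ge> 1" using c(2) t u0 by (simp add: field_simps)
  have tw: "of_real t * (of_real (1/t) * w) = w" using t by simp
  have "ennreal (1 / t^2) * ray_density p \<psi> (of_real (1/t) * w) t = ennreal ((1/t^2) * ray_integrand p \<psi> (of_real (1/t) * w) t)"
    using True t by (simp add: ray_density_def ennreal_mult'[symmetric])
  also have "(1/t^2) * ray_integrand p \<psi> (of_real (1/t) * w) t = (norm (\<psi> w) * fock_weight w) powr p * u powr (2-p) * (1/t^3 * exp (- (1/t^2 - 1) * u^2 / 2))"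
    unfolding ray_integrand_def tw nz using ray_density_scale_identity[OF t u0, of "(norm (\<psi> w) * fock_weight w) powr p" p] by simp
  also have "\<dots> = indicator {1..} (norm w) * (norm (\<psi> w) * fock_weight w) powr p * norm w powr (2 - p) *
        (indicator {0..1} t * (1 / t^3 * exp (- (1 / t^2 - 1) * (norm w)^2 / 2)))"
    using u1 c(3) t by (simp add: u_def)
  finally show ?thesis by (simp add: scaled_ray_density_def)
qed

lemma nn_integral_ray_density_le_scaled:
  assumes [measurable]: "\<psi> \<in> borel_measurable borel"
  shows "(\<integral>\<^sup>+ z. ray_density p \<psi> z t \<partial>lborel) \<le> (\<integral>\<^sup>+ w. scaled_ray_density p \<psi> w t \<partial>lborel)"
proof (cases "t > 0")
  case False
  hence "(\<integral>\<^sup>+ z. ray_density p \<psi> z t \<partial>lborel) = 0" by (simp add: ray_density_eq_0)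
  thus ?thesis by simp
next
  case True
  have "(\<lambda>z. ray_density p \<psi> z t) \<in> borel_measurable borel"
    using measurable_compose[OF measurable_Pair2'[of t lborel lborel] borel_measurable_ray_density] by simp
  hence "(\<integral>\<^sup>+ z. ray_density p \<psi> z t \<partial>lborel)
      = (\<integral>\<^sup>+ w. ennreal (1 / t^2) * ray_density p \<psi> (of_real (1/t) * w) t \<partial>lborel)"
    by (rule nn_integral_lborel_complex_scale[OF True])
  also have "\<dots> \<le> (\<integral>\<^sup>+ w. scaled_ray_density p \<psi> w t \<partial>lborel)"
    by (intro nn_integral_mono ray_density_scaled_le True)
  finally show ?thesis .
qed

lemma nn_integral_scaled_ray_density_le:
  assumes p: "p \<ge> 1"
  shows "(\<integral>\<^sup>+ t. scaled_ray_density p \<psi> w t \<partial>lborel) \<le> ennreal ((norm (\<psi> w) * fock_weight w) powr p)"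
proof -
  define A where "A = indicator {1..} (norm w) * (norm (\<psi> w) * fock_weight w) powr p * norm w powr (2 - p)"
  have A0: "A \<ge> 0" by (simp add: A_def)
  have kernel0: "indicator {0..1} t * (1 / t^3 * exp (- (1 / t^2 - 1) * (norm w)^2 / 2)) \<ge> 0" for t :: real
    by (auto simp: indicator_def)
  have "(\<integral>\<^sup>+ t. scaled_ray_density p \<psi> w t \<partial>lborel) = (\<integral>\<^sup>+ t. ennreal A *
      ennreal (indicator {0..1} t * (1 / t^3 * exp (- (1 / t^2 - 1) * (norm w)^2 / 2))) \<partial>lborel)"
  proof (intro nn_integral_cong)
    fix t :: real
    have "scaled_ray_density p \<psi> w t
        = ennreal (A * (indicator {0..1} t * (1 / t^3 * exp (- (1 / t^2 - 1) * (norm w)^2 / 2))))"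
      by (simp add: scaled_ray_density_def A_def)
    thus "scaled_ray_density p \<psi> w t
        = ennreal A * ennreal (indicator {0..1} t * (1 / t^3 * exp (- (1 / t^2 - 1) * (norm w)^2 / 2)))"
      using ennreal_mult[OF A0 kernel0[of t]] by simp
  qed
  also have "\<dots> = ennreal A *
      (\<integral>\<^sup>+ t. ennreal (indicator {0..1} t * (1 / t^3 * exp (- (1 / t^2 - 1) * (norm w)^2 / 2))) \<partial>lborel)"
    by (rule nn_integral_cmult) measurable
  also have "\<dots> \<le> ennreal ((norm (\<psi> w) * fock_weight w) powr p)"
  proof (cases "norm w \<ge> 1")
    case False thus ?thesis by (simp add: A_def)
  next
    case True
    hence w0: "norm w > 0" by linarith
    have "A * (1 / (norm w)^2) = (norm (\<psi> w) * fock_weight w) powr p * (norm w powr (2 - p) / (norm w)^2)"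
      using True by (simp add: A_def)
    also have "norm w powr (2 - p) / (norm w)^2 = 1 / norm w powr p"
      using w0 by (simp add: powr_diff powr_numeral)
    also have "(norm (\<psi> w) * fock_weight w) powr p * (1 / norm w powr p) \<le> (norm (\<psi> w) * fock_weight w) powr p"
      using True p ge_one_powr_ge_zero[of "norm w" p] by (intro mult_left_le) (auto simp: divide_le_eq_1)
    finally have "A * (1 / (norm w)^2) \<le> (norm (\<psi> w) * fock_weight w) powr p" .
    thus ?thesis
      unfolding nn_integral_ray_kernel[OF w0] ennreal_mult[OF A0 divide_nonneg_nonneg[OF zero_le_one zero_le_power2], symmetric]
      by (rule ennreal_leI)
  qed
  finally show ?thesis .
qed

text \<open>Fubini and the substitution \<open>w = t z\<close>: the \<open>t\<close>-integral of the kernel is \<open>|w|\<^sup>-\<^sup>2\<close>, which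
  absorbs the factor \<open>|w|\<^sup>2\<^sup>-\<^sup>p\<close> of \<open>ray_integrand\<close>.\<close>

lemma nn_integral_ray_density_finite:
  assumes p: "p \<ge> 1" and \<psi>: "continuous_on UNIV \<psi>" and fin: "fock_integral p \<psi> < \<infinity>"
  shows "(\<integral>\<^sup>+ z. (\<integral>\<^sup>+ t. ray_density p \<psi> z t \<partial>lborel) \<partial>lborel) < \<infinity>"
proof -
  have m\<psi> [measurable]: "\<psi> \<in> borel_measurable borel" using \<psi> borel_measurable_continuous_onI by blast
  have "(\<integral>\<^sup>+ z. (\<integral>\<^sup>+ t. ray_density p \<psi> z t \<partial>lborel) \<partial>lborel)
      = (\<integral>\<^sup>+ t. (\<integral>\<^sup>+ z. ray_density p \<psi> z t \<partial>lborel) \<partial>lborel)"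
    using lborel_pair.Fubini'[OF borel_measurable_ray_density[OF m\<psi>]] by simp
  also have "\<dots> \<le> (\<integral>\<^sup>+ t. (\<integral>\<^sup>+ w. scaled_ray_density p \<psi> w t \<partial>lborel) \<partial>lborel)"
    by (intro nn_integral_mono nn_integral_ray_density_le_scaled m\<psi>)
  also have "\<dots> = (\<integral>\<^sup>+ w. (\<integral>\<^sup>+ t. scaled_ray_density p \<psi> w t \<partial>lborel) \<partial>lborel)"
    using lborel_pair.Fubini'[OF borel_measurable_scaled_ray_density[OF m\<psi>]] by simp
  also have "\<dots> \<le> fock_integral p \<psi>"
    unfolding fock_integral_def by (intro nn_integral_mono nn_integral_scaled_ray_density_le p)
  finally show ?thesis using fin by simp
qed

lemma fock_integrand_le_ray_density:
  assumes g: "g holomorphic_on UNIV" and p: "p \<ge> 1"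
    and B: "\<And>w. norm w \<le> 1 \<Longrightarrow> norm (g w) \<le> B"
  shows "ennreal ((norm (g z) * fock_weight z) powr p) \<le> ennreal (B powr p) * indicator (cball 0 1) z +
      ennreal (2 powr p) * (ennreal ((norm (of_real B :: complex) * fock_weight z) powr p) +
        (\<integral>\<^sup>+ t. ray_density p (deriv g) z t \<partial>lborel))"
proof (cases "norm z \<le> 1")
  case True
  have B0: "B \<ge> 0" using order.trans[OF norm_ge_zero B[of 0]] by simp
  have "norm (g z) * fock_weight z \<le> B * 1"
    using B[OF True] fock_weight_le_1[of z] B0 by (intro mult_mono) auto
  hence "(norm (g z) * fock_weight z) powr p \<le> B powr p" using p by (intro powr_mono2) auto
  hence "ennreal ((norm (g z) * fock_weight z) powr p) \<le> ennreal (B powr p) * indicator (cball 0 1) z"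
    using True by (simp add: ennreal_leI)
  thus ?thesis by (rule order.trans) simp
next
  case False
  define r where "r = norm z"
  have r: "r > 1" using False by (simp add: r_def)
  have B0: "B \<ge> 0" using order.trans[OF norm_ge_zero B[of 0]] by simp
  have "continuous_on UNIV (deriv g)"
    using g by (intro holomorphic_on_imp_continuous_on holomorphic_deriv) auto
  hence cG: "continuous_on {1/r..1} (ray_integrand p (deriv g) z)"
    using p r by (intro continuous_on_ray_integrand) auto
  hence "(ray_integrand p (deriv g) z has_integral integral {1/r..1} (ray_integrand p (deriv g) z)) {1/r..1}"
    using integrable_continuous_interval by (simp add: has_integral_integral)
  hence "(\<integral>\<^sup>+ t. ennreal (indicator {1/r..1} t * ray_integrand p (deriv g) z t) \<partial>lborel)
      = ennreal (integral {1/r..1} (ray_integrand p (deriv g) z))"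
    by (rule nn_integral_has_integral_lebesgue[rotated]) (simp add: ray_integrand_nonneg)
  moreover have "ray_density p (deriv g) z t = ennreal (indicator {1/r..1} t * ray_integrand p (deriv g) z t)" for t
    using r by (simp add: ray_density_def ray_region_def indicator_def r_def)
  ultimately have I: "(\<integral>\<^sup>+ t. ray_density p (deriv g) z t \<partial>lborel)
      = ennreal (integral {1/r..1} (ray_integrand p (deriv g) z))"
    by simp
  have I0: "integral {1/r..1} (ray_integrand p (deriv g) z) \<ge> 0"
    by (intro integral_nonneg integrable_continuous_interval cG ray_integrand_nonneg)
  have "(norm (g z) * fock_weight z) powr p
      \<le> 2 powr p * ((B * fock_weight z) powr p + integral {1/r..1} (ray_integrand p (deriv g) z))"
    using fock_integrand_le_ray_integral[OF g p B] r by (simp add: r_def)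
  hence "ennreal ((norm (g z) * fock_weight z) powr p) \<le> ennreal (2 powr p) *
      (ennreal ((norm (of_real B :: complex) * fock_weight z) powr p) +
       ennreal (integral {1/r..1} (ray_integrand p (deriv g) z)))"
    using I0 B0 by (simp add: ennreal_leI ennreal_mult'[symmetric] ennreal_plus[symmetric] del: ennreal_plus)
  thus ?thesis unfolding I by (rule order.trans) simp
qed

lemma in_fock_if_deriv_in_fock:
  assumes g: "g holomorphic_on UNIV" and p: "p \<ge> 1" and g': "in_fock p (deriv g)"
  shows "in_fock p g"
proof -
  define \<psi> where "\<psi> = deriv g"
  have c\<psi>: "continuous_on UNIV \<psi>"
    unfolding \<psi>_def using g by (intro holomorphic_on_imp_continuous_on holomorphic_deriv) auto
  have m\<psi> [measurable]: "\<psi> \<in> borel_measurable borel"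
    using c\<psi> borel_measurable_continuous_onI by blast
  have fin: "fock_integral p \<psi> < \<infinity>"
    using g' by (simp add: in_fock_iff_fock_integral \<psi>_def)
  have "compact (g ` cball 0 1)"
    using g by (intro compact_continuous_image holomorphic_on_imp_continuous_on compact_cball)
      (auto intro: holomorphic_on_subset)
  then obtain B where "\<forall>x\<in>g ` cball 0 1. norm x \<le> B"
    using compact_imp_bounded bounded_iff by metis
  hence B: "norm (g w) \<le> B" if "norm w \<le> 1" for w using that by auto
  have mB: "(\<lambda>z. ennreal ((norm (of_real B :: complex) * fock_weight z) powr p)) \<in> borel_measurable lborel"
    by measurable
  have mH: "(\<lambda>z. \<integral>\<^sup>+ t. ray_density p \<psi> z t \<partial>lborel) \<in> borel_measurable lborel"
    using lborel.borel_measurable_nn_integral_fst[OF borel_measurable_ray_density[OF m\<psi>]] by simp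
  have cball: "cball (0::complex) 1 \<in> sets lborel" by (simp add: borel_closed)
  hence mI: "(\<lambda>z. ennreal (B powr p) * indicator (cball (0::complex) 1) z) \<in> borel_measurable lborel"
    by (intro borel_measurable_times_ennreal borel_measurable_const borel_measurable_indicator)
  have mR: "(\<lambda>z. ennreal (2 powr p) * (ennreal ((norm (of_real B :: complex) * fock_weight z) powr p) +
      (\<integral>\<^sup>+ t. ray_density p \<psi> z t \<partial>lborel))) \<in> borel_measurable lborel"
    by (intro borel_measurable_times_ennreal borel_measurable_const borel_measurable_add mB mH)
  have "fock_integral p g \<le> (\<integral>\<^sup>+ z. ennreal (B powr p) * indicator (cball 0 1) z +
      ennreal (2 powr p) * (ennreal ((norm (of_real B :: complex) * fock_weight z) powr p) +
        (\<integral>\<^sup>+ t. ray_density p \<psi> z t \<partial>lborel)) \<partial>lborel)"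
    unfolding fock_integral_def \<psi>_def using fock_integrand_le_ray_density[OF g p B]
    by (intro nn_integral_mono) auto
  also have "\<dots> = ennreal (B powr p) * emeasure lborel (cball (0::complex) 1) +
      ennreal (2 powr p) * (fock_integral p (\<lambda>_. of_real B) +
        (\<integral>\<^sup>+ z. (\<integral>\<^sup>+ t. ray_density p \<psi> z t \<partial>lborel) \<partial>lborel))"
    unfolding fock_integral_def
    by (simp only: nn_integral_add[OF mI mR] nn_integral_cmult_indicator[OF cball]
        nn_integral_cmult[OF borel_measurable_add[OF mB mH]] nn_integral_add[OF mB mH])
  also have "\<dots> < \<infinity>"
    using emeasure_bounded_finite[of "cball (0::complex) 1"] fock_integral_const_finite[OF p]
      nn_integral_ray_density_finite[OF p c\<psi> fin]
    by (simp add: ennreal_mult_less_top)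
  finally show ?thesis using g by (simp add: in_fock_iff_fock_integral)
qed

lemma in_fock_if_deriv_sub_in_fock:
  assumes g: "g holomorphic_on UNIV" and p: "p \<ge> 1"
    and L: "in_fock p (\<lambda>z. deriv g z - l * g z)"
  shows "in_fock p g"
proof -
  define a where "a = - cnj l"
  have L_holo: "(\<lambda>z. deriv g z - l * g z) holomorphic_on UNIV"
    using g by (intro holomorphic_intros holomorphic_deriv) auto
  have "deriv (weyl_shift a g) = weyl_shift a (\<lambda>z. deriv g z - l * g z)"
    using deriv_weyl_shift[OF g, of a] by (simp add: a_def)
  hence "in_fock p (deriv (weyl_shift a g))"
    using L in_fock_weyl_shift_iff[OF L_holo, of p a] p by simp
  hence "in_fock p (weyl_shift a g)"
    using in_fock_if_deriv_in_fock holomorphic_weyl_shift[OF g] p by blast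
  thus ?thesis using in_fock_weyl_shift_iff[OF g, of p a] p by simp
qed

section \<open>Linear differential operators with constant coefficients\<close>

definition poly_diff_op :: "complex poly \<Rightarrow> (complex \<Rightarrow> complex) \<Rightarrow> complex \<Rightarrow> complex" where
  "poly_diff_op P g = (\<lambda>z. \<Sum>j\<le>degree P. coeff P j * (deriv ^^ j) g z)"

lemma poly_diff_op_eq_sum:
  assumes "degree P \<le> n"
  shows "poly_diff_op P g z = (\<Sum>j\<le>n. coeff P j * (deriv ^^ j) g z)"
  unfolding poly_diff_op_def using assms by (intro sum.mono_neutral_left) (auto simp: coeff_eq_0)

lemma holomorphic_poly_diff_op:
  assumes "g holomorphic_on UNIV"
  shows "poly_diff_op P g holomorphic_on UNIV"
  unfolding poly_diff_op_def using assms by (intro holomorphic_intros) auto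

lemma poly_diff_op_1 [simp]: "poly_diff_op 1 g = g"
  by (simp add: poly_diff_op_def)

lemma poly_diff_op_smult: "poly_diff_op (smult a P) g z = a * poly_diff_op P g z"
  using poly_diff_op_eq_sum[of "smult a P" "degree P"] poly_diff_op_eq_sum[of P "degree P"]
  by (simp add: degree_smult_le sum_distrib_left mult.assoc)

lemma coeff_mult_linear_factor:
  "coeff (Q * [:- a, 1:]) j = (if j = 0 then 0 else coeff Q (j - 1)) - a * coeff (Q :: complex poly) j"
proof -
  have "Q * [:- a, 1:] = smult (- a) Q + pCons 0 Q"
    by (simp add: mult.commute[of Q] mult_pCons_left)
  thus ?thesis by (cases j) simp_all
qed

lemma poly_diff_op_mult_linear_factor:
  assumes g: "g holomorphic_on UNIV"
  shows "poly_diff_op (P * [:- r, 1:]) g z = deriv (poly_diff_op P g) z - r * poly_diff_op P g z"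
proof -
  define n where "n = degree P"
  have "(deriv ^^ j) g field_differentiable at z" for j
    using g by (intro holomorphic_on_imp_differentiable_at holomorphic_higher_deriv) auto
  hence deriv: "deriv (poly_diff_op P g) z = (\<Sum>j\<le>n. coeff P j * (deriv ^^ Suc j) g z)"
    by (simp add: poly_diff_op_def n_def field_differentiable_mult field_differentiable_const)
  have "degree (P * [:- r, 1:]) \<le> Suc n"
    using degree_mult_le[of P "[:- r, 1:]"] by (simp add: n_def)
  hence "poly_diff_op (P * [:- r, 1:]) g z = (\<Sum>j\<le>Suc n. coeff (P * [:- r, 1:]) j * (deriv ^^ j) g z)"
    by (rule poly_diff_op_eq_sum)
  also have "\<dots> = (\<Sum>j\<le>Suc n. (if j = 0 then 0 else coeff P (j - 1)) * (deriv ^^ j) g z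
      - r * (coeff P j * (deriv ^^ j) g z))"
    by (rule sum.cong[OF refl]) (simp only: coeff_mult_linear_factor left_diff_distrib mult.assoc)
  also have "\<dots> = (\<Sum>j\<le>Suc n. (if j = 0 then 0 else coeff P (j - 1)) * (deriv ^^ j) g z)
      - r * (\<Sum>j\<le>Suc n. coeff P j * (deriv ^^ j) g z)"
    by (simp only: sum_subtractf sum_distrib_left)
  also have "(\<Sum>j\<le>Suc n. (if j = 0 then 0 else coeff P (j - 1)) * (deriv ^^ j) g z)
      = deriv (poly_diff_op P g) z"
    unfolding deriv by (subst sum.atMost_Suc_shift) simp
  also have "(\<Sum>j\<le>Suc n. coeff P j * (deriv ^^ j) g z) = poly_diff_op P g z"
    by (rule poly_diff_op_eq_sum[symmetric]) (simp add: n_def)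
  finally show ?thesis .
qed

lemma in_fock_if_poly_diff_op_in_fock:
  assumes P: "P \<noteq> 0" and g: "g holomorphic_on UNIV" and p: "p \<ge> 1"
    and Pg: "in_fock p (poly_diff_op P g)"
  shows "in_fock p g"
proof -
  obtain rt where P_eq: "smult (lead_coeff P) (\<Prod>i<degree P. [:- rt i, 1:]) = P"
    by (rule complex_poly_decompose')
  have product: "in_fock p g" if "in_fock p (poly_diff_op (\<Prod>i<n. [:- rt i, 1:]) g)" for n
    using that
  proof (induction n)
    case 0
    thus ?case by simp
  next
    case (Suc n)
    have "poly_diff_op (\<Prod>i<Suc n. [:- rt i, 1:]) g = (\<lambda>z. deriv (poly_diff_op (\<Prod>i<n. [:- rt i, 1:]) g) z
        - rt n * poly_diff_op (\<Prod>i<n. [:- rt i, 1:]) g z)"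
      unfolding prod.lessThan_Suc by (rule ext) (rule poly_diff_op_mult_linear_factor[OF g])
    with Suc.prems have "in_fock p (\<lambda>z. deriv (poly_diff_op (\<Prod>i<n. [:- rt i, 1:]) g) z
        - rt n * poly_diff_op (\<Prod>i<n. [:- rt i, 1:]) g z)"
      by simp
    thus ?case
      by (intro Suc.IH in_fock_if_deriv_sub_in_fock[OF holomorphic_poly_diff_op[OF g] p])
  qed
  have "lead_coeff P \<noteq> 0" using P by simp
  hence "poly_diff_op (\<Prod>i<degree P. [:- rt i, 1:]) g = (\<lambda>z. (1 / lead_coeff P) * poly_diff_op P g z)"
    by (subst (2) P_eq[symmetric]) (simp add: fun_eq_iff poly_diff_op_smult)
  thus ?thesis
    using in_fock_cmult[OF Pg, of "1 / lead_coeff P"] p by (intro product[of "degree P"]) simp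
qed

lemma poly_diff_op_monom_plus_const:
  assumes k: "k \<ge> 1"
  shows "poly_diff_op (monom 1 k + [:c:]) g z = (deriv ^^ k) g z + c * g z"
proof -
  have "degree (monom 1 k + [:c:]) \<le> k"
    by (intro degree_add_le) (auto simp: degree_monom_le)
  hence "poly_diff_op (monom 1 k + [:c:]) g z = (\<Sum>j\<le>k. coeff (monom 1 k + [:c:]) j * (deriv ^^ j) g z)"
    by (rule poly_diff_op_eq_sum)
  also have "\<dots> = (\<Sum>j\<le>k. (if j = k then (deriv ^^ j) g z else 0) + (if j = 0 then c * (deriv ^^ j) g z else 0))"
    using k by (intro sum.cong refl) (auto simp: coeff_monom coeff_pCons split: nat.splits)
  also have "\<dots> = (deriv ^^ k) g z + c * g z"
    by (simp add: sum.distrib)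
  finally show ?thesis .
qed

lemma higher_deriv_linear_eq:
  assumes f: "f holomorphic_on UNIV" and \<phi>: "\<phi> holomorphic_on UNIV"
    and eq: "\<And>z. (deriv ^^ k) f z + c * f z = (deriv ^^ k) \<phi> z"
  shows "(deriv ^^ (n + k)) f z + c * (deriv ^^ n) f z = (deriv ^^ (n + k)) \<phi> z"
proof -
  have "(deriv ^^ (n + k)) \<phi> z = (deriv ^^ n) (\<lambda>z. (deriv ^^ k) f z + c * f z) z"
    using eq by (simp add: funpow_add)
  also have "\<dots> = (deriv ^^ n) ((deriv ^^ k) f) z + (deriv ^^ n) (\<lambda>z. c * f z) z"
    using f by (intro higher_deriv_add holomorphic_intros holomorphic_higher_deriv) auto
  also have "(deriv ^^ n) (\<lambda>z. c * f z) z = c * (deriv ^^ n) f z"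
    using f by (intro higher_deriv_cmult) auto
  finally show ?thesis by (simp add: funpow_add)
qed

lemma in_fock_sobolev_if_const_coeff:
  assumes k: "k \<ge> 1" and p: "p \<ge> 1" and \<phi>: "in_fock_sobolev p k \<phi>"
    and f: "f holomorphic_on UNIV"
    and eq: "\<And>z. (deriv ^^ k) f z + c * f z = (deriv ^^ k) \<phi> z"
  shows "in_fock_sobolev p k f"
proof -
  have h\<phi>: "\<phi> holomorphic_on UNIV" using \<phi> by (simp add: in_fock_sobolev_def)
  have P: "monom 1 k + [:c:] \<noteq> 0"
    using k by (metis add.right_neutral coeff_add coeff_monom coeff_pCons_Suc coeff_0 one_neq_zero
        Suc_pred' less_le_trans zero_less_one)
  have "in_fock p ((deriv ^^ n) f)" if n: "n \<le> k" for n
  proof -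
    define v where "v = (\<lambda>z. (deriv ^^ n) f z - (deriv ^^ n) \<phi> z)"
    have hv: "v holomorphic_on UNIV"
      unfolding v_def using f h\<phi> by (intro holomorphic_intros holomorphic_higher_deriv) auto
    have "poly_diff_op (monom 1 k + [:c:]) v = (\<lambda>z. (- c) * (deriv ^^ n) \<phi> z)"
    proof
      fix z
      have "(deriv ^^ k) v z = (deriv ^^ k) ((deriv ^^ n) f) z - (deriv ^^ k) ((deriv ^^ n) \<phi>) z"
        unfolding v_def using f h\<phi> by (intro higher_deriv_diff holomorphic_higher_deriv) auto
      also have "\<dots> = (deriv ^^ (n + k)) f z - (deriv ^^ (n + k)) \<phi> z"
        by (metis (no_types) add.commute comp_apply funpow_add)
      finally have Dv: "(deriv ^^ k) v z = (deriv ^^ (n + k)) f z - (deriv ^^ (n + k)) \<phi> z" .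
      have "poly_diff_op (monom 1 k + [:c:]) v z = (deriv ^^ k) v z + c * v z"
        by (rule poly_diff_op_monom_plus_const[OF k])
      also have "\<dots> = ((deriv ^^ (n + k)) f z + c * (deriv ^^ n) f z)
          - (deriv ^^ (n + k)) \<phi> z - c * (deriv ^^ n) \<phi> z"
        unfolding Dv by (simp add: v_def algebra_simps)
      also have "\<dots> = (- c) * (deriv ^^ n) \<phi> z"
        unfolding higher_deriv_linear_eq[OF f h\<phi> eq] by simp
      finally show "poly_diff_op (monom 1 k + [:c:]) v z = (- c) * (deriv ^^ n) \<phi> z" .
    qed
    moreover have "in_fock p ((deriv ^^ n) \<phi>)" using \<phi> n by (simp add: in_fock_sobolev_def)
    ultimately have "in_fock p v"
      using in_fock_if_poly_diff_op_in_fock[OF P hv p] in_fock_cmult[of p "(deriv ^^ n) \<phi>" "- c"] p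
      by simp
    hence "in_fock p (\<lambda>z. v z + (deriv ^^ n) \<phi> z)"
      using p \<open>in_fock p ((deriv ^^ n) \<phi>)\<close> by (auto intro: in_fock_add)
    thus ?thesis by (simp add: v_def)
  qed
  thus ?thesis using f by (simp add: in_fock_sobolev_def)
qed

section \<open>The equation with general coefficients\<close>

lemma entire_eq_0_if_norm_le_inverse:
  assumes A: "A holomorphic_on UNIV" and le: "\<And>w. norm (A w) \<le> 1 / (1 + norm w)"
  shows "A z = 0"
proof (rule Liouville_weak_0[OF A])
  have "filterlim (\<lambda>w::complex. 1 + norm w) at_top at_infinity"
    using filterlim_at_infinity_imp_norm_at_top[OF filterlim_ident]
    by (rule filterlim_tendsto_add_at_top[OF tendsto_const])
  hence "((\<lambda>w::complex. 1 / (1 + norm w)) \<longlongrightarrow> 0) at_infinity"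
    using tendsto_inverse_0_at_top by (simp add: inverse_eq_divide)
  thus "(A \<longlongrightarrow> 0) at_infinity"
    by (rule Lim_null_comparison[OF always_eventually, rotated]) (use le in auto)
qed

lemma ereal_member_le_sum:
  fixes f :: "'a \<Rightarrow> ereal"
  assumes "finite S" "a \<in> S" "\<And>i. i \<in> S \<Longrightarrow> f i \<ge> 0"
  shows "f a \<le> sum f S"
proof -
  have "sum f S = f a + sum f (S - {a})" using assms by (simp add: sum.remove)
  moreover have "sum f (S - {a}) \<ge> 0" using assms by (intro sum_nonneg) auto
  ultimately show ?thesis by (simp add: add_increasing2)
qed

lemma norm_coefficient_less_if_small:
  fixes A :: "nat \<Rightarrow> complex \<Rightarrow> complex"
  assumes small: "(\<Sum>i\<le>k. ereal 1 *
      (\<Sum>j<k. (SUP z. ereal (norm (A j z) / (1 + norm z) powr (real k - real i - real j))) * ereal 1)) < 1"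
    and j: "j < k"
  shows "norm (A j z) < (1 + norm z) powr (- real j)"
proof -
  define S where "S i j = (SUP z. ereal (norm (A j z) / (1 + norm z) powr (real k - real i - real j)))" for i j
  have S0: "S i j \<ge> 0" for i j
    unfolding S_def by (rule SUP_upper2[of 0]) auto
  have "ereal (norm (A j z) / (1 + norm z) powr (- real j)) \<le> S k j"
    unfolding S_def by (rule SUP_upper2[of z]) simp_all
  also have "\<dots> \<le> (\<Sum>j<k. S k j)"
    using j S0 by (intro ereal_member_le_sum) auto
  also have "\<dots> \<le> (\<Sum>i\<le>k. \<Sum>j<k. S i j)"
    using S0 by (intro ereal_member_le_sum sum_nonneg) auto
  also have "\<dots> < 1" using small by (simp add: S_def)
  finally have "norm (A j z) / (1 + norm z) powr (- real j) < 1" by simp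
  moreover have "(1 + norm z) powr (- real j) > 0"
    using add_pos_nonneg[OF zero_less_one norm_ge_zero[of z]] by simp
  ultimately show ?thesis by (simp add: divide_less_eq)
qed

lemma lower_order_terms_if_small:
  fixes A :: "nat \<Rightarrow> complex \<Rightarrow> complex" and f :: "complex \<Rightarrow> complex"
  assumes k: "k \<ge> 1" and holo: "\<forall>j\<le>k. A j holomorphic_on UNIV"
    and small: "(\<Sum>i\<le>k. ereal 1 *
      (\<Sum>j<k. (SUP z. ereal (norm (A j z) / (1 + norm z) powr (real k - real i - real j))) * ereal 1)) < 1"
  obtains c where "\<And>z. (\<Sum>j<k. A j z * (deriv ^^ j) f z) = c * f z"
proof -
  note bound = norm_coefficient_less_if_small[OF small]
  have vanish: "A j z = 0" if "1 \<le> j" "j < k" for j z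
  proof (rule entire_eq_0_if_norm_le_inverse[of "A j"])
    show "A j holomorphic_on UNIV" using holo that by simp
    show "norm (A j w) \<le> 1 / (1 + norm w)" for w
      using bound[OF that(2), of w] that powr_mono[of "- real j" "- 1" "1 + norm w"]
      by (simp add: powr_minus_divide)
  qed
  have "norm (A 0 z) \<le> 1" for z
  proof -
    have "1 + norm z \<noteq> 0" using norm_ge_zero[of z] by linarith
    thus ?thesis using bound[of 0 z] k by simp
  qed
  hence "bounded (range (A 0))" by (auto simp: bounded_iff)
  then obtain c where c: "A 0 z = c" for z
    using Liouville_theorem[of "A 0"] holo by (auto simp: constant_on_def)
  have "(\<Sum>j<k. A j z * (deriv ^^ j) f z) = c * f z" for z
  proof -
    have "(\<Sum>j<k. A j z * (deriv ^^ j) f z) = (\<Sum>j\<in>{0}. A j z * (deriv ^^ j) f z)"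
      using k vanish by (intro sum.mono_neutral_right) auto
    thus ?thesis using c by simp
  qed
  thus ?thesis by (rule that)
qed

theorem theorem1p2:
  fixes p :: real and k :: nat
  assumes "k \<ge> 1" and "p \<ge> 1"
  shows "\<exists>C E :: nat \<Rightarrow> real. (\<forall>i\<le>k. C i > 0) \<and> (\<forall>j<k. E j > 0) \<and>
    (\<forall>(A :: nat \<Rightarrow> complex \<Rightarrow> complex) (f :: complex \<Rightarrow> complex).
       (\<forall>j\<le>k. A j holomorphic_on UNIV) \<longrightarrow>
       (\<Sum>i\<le>k. ereal (C i) *
          (\<Sum>j<k. (SUP z. ereal (norm (A j z) / (1 + norm z) powr (real k - real i - real j)))
                   * ereal (E j))) < 1 \<longrightarrow>
       (\<exists>\<phi>. \<phi> holomorphic_on UNIV \<and> (deriv ^^ k) \<phi> = A k \<and> in_fock_sobolev p k \<phi>) \<longrightarrow>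
       f holomorphic_on UNIV \<longrightarrow>
       (\<forall>z. (deriv ^^ k) f z + (\<Sum>j<k. A j z * (deriv ^^ j) f z) = A k z) \<longrightarrow>
       in_fock_sobolev p k f)"
proof (intro exI[of _ "\<lambda>_. 1"] conjI allI impI)
  fix A :: "nat \<Rightarrow> complex \<Rightarrow> complex" and f :: "complex \<Rightarrow> complex"
  assume holo: "\<forall>j\<le>k. A j holomorphic_on UNIV"
    and small: "(\<Sum>i\<le>k. ereal 1 * (\<Sum>j<k. (SUP z. ereal (norm (A j z) /
      (1 + norm z) powr (real k - real i - real j))) * ereal 1)) < 1"
    and "\<exists>\<phi>. \<phi> holomorphic_on UNIV \<and> (deriv ^^ k) \<phi> = A k \<and> in_fock_sobolev p k \<phi>"
    and f: "f holomorphic_on UNIV"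
    and eq: "\<forall>z. (deriv ^^ k) f z + (\<Sum>j<k. A j z * (deriv ^^ j) f z) = A k z"
  then obtain \<phi> where \<phi>: "(deriv ^^ k) \<phi> = A k" "in_fock_sobolev p k \<phi>" by blast
  obtain c where "\<And>z. (\<Sum>j<k. A j z * (deriv ^^ j) f z) = c * f z"
    using lower_order_terms_if_small[OF assms(1) holo small, where f = f] by blast
  hence "(deriv ^^ k) f z + c * f z = (deriv ^^ k) \<phi> z" for z
    using eq \<phi>(1) by simp
  thus "in_fock_sobolev p k f"
    using in_fock_sobolev_if_const_coeff[OF assms \<phi>(2) f] by blast
qed auto

end
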